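(* Let $\mathcal{L}:\mathbb{R}^p\to\mathbb{R}$ be continuously differentiable, let $\theta_0\in\mathbb{R}^p$, and let $\mathcal{B}(\theta_0)\subseteq\mathbb{R}^p$ be a non-empty set containing $\theta_0$. Let $(\theta_t)_{t\ge0}$ be generated by gradient descent $\theta_{t+1}=\theta_t-\eta_t\nabla_\theta\mathcal{L}(\theta_t)$ with all iterates $\theta_t$, $t\ge1$, in $\mathcal{B}(\theta_0)$. Fix $t$ and suppose: (RSC condition) there is a non-empty set $\mathcal{N}_t$ such that (a) $\mathcal{N}_t\subseteq\mathcal{B}(\theta_0)$; (b) either (b.1) $\theta_{t+1}\in\mathcal{N}_t$ and either $\theta_t\notin\mathcal{N}_t$ or $\mathcal{L}(\theta_t)\ne\inf_{\theta\in\mathcal{N}_t}\mathcal{L}(\theta)$, or (b.2) there exists $\theta'\in\mathcal{N}_t$ with $\mathcal{L}(\theta')<\mathcal{L}(\theta_t)$; and (c) $\mathcal{L}$ satisfies $\alpha_t$-RSC with respect to $(\mathcal{N}_t,\theta_t)$ for some $\alpha_t>0$; (Smoothness condition) for some $\beta>0$, $\mathcal{L}(\theta')\le\mathcal{L}(\theta)+\langle\theta'-\theta,\nabla_\theta\mathcal{L}(\theta)\rangle+\frac{\beta}{2}\|\theta'-\theta\|_2^2$ for all $\theta,\theta'\in\mathcal{B}(\theta_0)$. Assume $\alpha_t\le\beta$ and $\eta_t=\omega_t/\beta$ with $\omega_t\in(0,2)$. Then $$\mathcal{L}(\theta_{t+1})-\inf_{\theta\in\mathcal{N}_t}\mathc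al{L}(\theta)\le\Big(1-\frac{\alpha_t\omega_t}{\beta}(2-\omega_t)\Big)\Big(\mathcal{L}(\theta_t)-\inf_{\theta\in\mathcal{N}_t}\mathcal{L}(\theta)\Big).$$
   Context: A function $\mathcal{L}$ satisfies $\alpha$-restricted strong convexity ($\alpha$-RSC) with respect to a tuple $(\mathcal{S},\theta)$, where $\mathcal{S}\subseteq\mathbb{R}^p$ and $\theta\in\mathbb{R}^p$ is fixed, if $\alpha>0$ and for every $\theta'\in\mathcal{S}$: $\mathcal{L}(\theta')\ge\mathcal{L}(\theta)+\langle\theta'-\theta,\nabla_\theta\mathcal{L}(\theta)\rangle+\frac{\alpha}{2}\|\theta'-\theta\|_2^2$. *)

theory Defs
  imports "HOL-Analysis.Analysis"
begin

definition RSC :: "('a::real_inner \<Rightarrow> real) \<Rightarrow> ('a \<Rightarrow> 'a) \<Rightarrow> real \<Rightarrow> 'a set \<Rightarrow> 'a \<Rightarrow> bool" where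
  "RSC L gradL \<alpha> S \<theta> \<longleftrightarrow> \<alpha> > 0 \<and>
     (\<forall>\<theta>'\<in>S. L \<theta>' \<ge> L \<theta> + (\<theta>' - \<theta>) \<bullet> gradL \<theta> + \<alpha> / 2 * (norm (\<theta>' - \<theta>))\<^sup>2)"

end

theory Submission
  imports Defs
begin

text \<open>Minimising the RSC lower bound over the direction turns restricted strong convexity at
  \<open>\<theta>\<^sub>t\<close> into a Polyak-Lojasiewicz inequality
  \<open>\<parallel>\<nabla>L(\<theta>\<^sub>t)\<parallel>\<^sup>2 \<ge> 2\<alpha>\<^sub>t (L(\<theta>\<^sub>t) - inf\<^sub>N L)\<close>, while smoothness turns the step of length
  \<open>\<omega>\<^sub>t/\<beta>\<close> into the decrease
  \<open>L(\<theta>\<^sub>t\<^sub>+\<^sub>1) \<le> L(\<theta>\<^sub>t) - \<omega>\<^sub>t(2 - \<omega>\<^sub>t)/(2\<beta>) \<parallel>\<nabla>L(\<theta>\<^sub>t)\<parallel>\<^sup>2\<close>.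
  Chaining the two bounds gives the contraction.\<close>

lemma inner_plus_quadratic_lower_bound:
  fixes d g :: "'a::real_inner"
  assumes "\<alpha> > 0"
  shows "d \<bullet> g + \<alpha> / 2 * (norm d)\<^sup>2 \<ge> - (norm g)\<^sup>2 / (2 * \<alpha>)"
proof -
  have "0 \<le> (\<alpha> *\<^sub>R d + g) \<bullet> (\<alpha> *\<^sub>R d + g)" by simp
  also have "\<dots> = \<alpha>\<^sup>2 * (d \<bullet> d) + 2 * \<alpha> * (d \<bullet> g) + g \<bullet> g"
    by (simp add: inner_add_left inner_add_right inner_commute power2_eq_square algebra_simps)
  finally have "0 \<le> \<alpha>\<^sup>2 * (norm d)\<^sup>2 + 2 * \<alpha> * (d \<bullet> g) + (norm g)\<^sup>2"
    by (simp only: power2_norm_eq_inner)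
  then show ?thesis
    using assms by (simp add: field_simps power2_eq_square)
qed

lemma RSC_imp_PL_inequality:
  assumes "RSC L gradL \<alpha> N x" and "N \<noteq> {}"
  shows "2 * \<alpha> * (L x - (INF z\<in>N. L z)) \<le> (norm (gradL x))\<^sup>2"
proof -
  have \<alpha>: "\<alpha> > 0"
    using assms(1) by (simp add: RSC_def)
  have "L x - (norm (gradL x))\<^sup>2 / (2 * \<alpha>) \<le> L z" if "z \<in> N" for z
    using assms(1) that inner_plus_quadratic_lower_bound[OF \<alpha>, where d = "z - x" and g = "gradL x"]
    unfolding RSC_def by fastforce
  then have "L x - (norm (gradL x))\<^sup>2 / (2 * \<alpha>) \<le> (INF z\<in>N. L z)"
    using assms(2) by (intro cINF_greatest) auto
  then show ?thesis
    using \<alpha> by (simp add: field_simps)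
qed

lemma smooth_gradient_step_decrease:
  fixes x g :: "'a::real_inner"
  assumes "\<beta> > 0"
    and y: "y = x - (\<omega> / \<beta>) *\<^sub>R g"
    and smooth: "L y \<le> L x + (y - x) \<bullet> g + \<beta> / 2 * (norm (y - x))\<^sup>2"
  shows "L y \<le> L x - \<omega> * (2 - \<omega>) / (2 * \<beta>) * (norm g)\<^sup>2"
proof -
  have "(y - x) \<bullet> g = - (\<omega> / \<beta>) * (norm g)\<^sup>2"
    by (simp add: y dot_square_norm)
  moreover have "(norm (y - x))\<^sup>2 = (\<omega> / \<beta>)\<^sup>2 * (norm g)\<^sup>2"
    by (simp add: y power_mult_distrib power_divide power2_abs)
  ultimately have "(y - x) \<bullet> g + \<beta> / 2 * (norm (y - x))\<^sup>2
      = - (\<omega> * (2 - \<omega>) / (2 * \<beta>)) * (norm g)\<^sup>2"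
    using \<open>\<beta> > 0\<close> by (simp add: field_simps power2_eq_square)
  then show ?thesis
    using smooth by simp
qed

theorem lemma2:
  fixes L :: "real ^ 'p \<Rightarrow> real"
    and gradL :: "real ^ 'p \<Rightarrow> real ^ 'p"
    and \<theta> :: "nat \<Rightarrow> real ^ 'p"
    and \<theta>0 :: "real ^ 'p"
    and B N :: "(real ^ 'p) set"
    and \<eta> :: "nat \<Rightarrow> real"
    and t :: nat
    and \<alpha> \<beta> \<omega> :: real
  assumes grad: "\<And>x. (L has_derivative (\<lambda>h. h \<bullet> gradL x)) (at x)"
    and grad_cont: "continuous_on UNIV gradL"
    and B0: "\<theta>0 \<in> B"
    and init: "\<theta> 0 = \<theta>0"
    and GD: "\<And>s. \<theta> (Suc s) = \<theta> s - \<eta> s *\<^sub>R gradL (\<theta> s)"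
    and inB: "\<And>s. s \<ge> 1 \<Longrightarrow> \<theta> s \<in> B"
    and N_ne: "N \<noteq> {}"
    and N_sub: "N \<subseteq> B"
    and cond_b: "(\<theta> (Suc t) \<in> N \<and> (\<theta> t \<notin> N \<or> L (\<theta> t) \<noteq> (INF x\<in>N. L x)))
                 \<or> (\<exists>\<theta>'\<in>N. L \<theta>' < L (\<theta> t))"
    and rsc: "RSC L gradL \<alpha> N (\<theta> t)"
    and beta_pos: "\<beta> > 0"
    and smooth: "\<And>x y. x \<in> B \<Longrightarrow> y \<in> B \<Longrightarrow>
                   L y \<le> L x + (y - x) \<bullet> gradL x + \<beta> / 2 * (norm (y - x))\<^sup>2"
    and alpha_le: "\<alpha> \<le> \<beta>"
    and step: "\<eta> t = \<omega> / \<beta>"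
    and omega: "0 < \<omega>" "\<omega> < 2"
  shows "L (\<theta> (Suc t)) - (INF x\<in>N. L x)
           \<le> (1 - \<alpha> * \<omega> / \<beta> * (2 - \<omega>)) * (L (\<theta> t) - (INF x\<in>N. L x))"
proof -
  define m where "m = (INF x\<in>N. L x)"
  define c where "c = \<omega> * (2 - \<omega>) / (2 * \<beta>)"
  have "\<theta> t \<in> B"
    using inB B0 init by (cases t) auto
  moreover have "\<theta> (Suc t) \<in> B"
    using inB by simp
  moreover have "\<theta> (Suc t) = \<theta> t - (\<omega> / \<beta>) *\<^sub>R gradL (\<theta> t)"
    using GD step by simp
  ultimately have "L (\<theta> (Suc t)) \<le> L (\<theta> t) - c * (norm (gradL (\<theta> t)))\<^sup>2"
    unfolding c_def using beta_pos smooth by (metis smooth_gradient_step_decrease)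
  moreover have "c * (2 * \<alpha> * (L (\<theta> t) - m)) \<le> c * (norm (gradL (\<theta> t)))\<^sup>2"
  proof (rule mult_left_mono)
    show "2 * \<alpha> * (L (\<theta> t) - m) \<le> (norm (gradL (\<theta> t)))\<^sup>2"
      unfolding m_def using rsc N_ne by (rule RSC_imp_PL_inequality)
    show "c \<ge> 0"
      unfolding c_def using omega beta_pos by simp
  qed
  ultimately have "L (\<theta> (Suc t)) - m \<le> (L (\<theta> t) - m) - c * (2 * \<alpha> * (L (\<theta> t) - m))"
    by linarith
  also have "\<dots> = (1 - \<alpha> * \<omega> / \<beta> * (2 - \<omega>)) * (L (\<theta> t) - m)"
    unfolding c_def using beta_pos by (simp add: field_simps)
  finally show ?thesis
    unfolding m_def .
qed

end
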